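(* Let $P=\mathbb{Q}[x_1,\dots,x_n]$, let $\sigma,\tau$ be two term orderings on $\mathbb{T}^n$, let $I$ be a non-zero ideal in $P$, and let $p$ be a prime which is $\sigma$-good for $I$. (a) If $p$ is $\tau$-good for $I$, then $O_\tau(I_{(p,\sigma)})=O_\tau(I)$. (b) If $p$ is $\tau$-bad for $I$, then $O_\tau(I_{(p,\sigma)})\prec_\tau O_\tau(I)$, and moreover $O_\tau(I)$ is not a proper prefix of $O_\tau(I_{(p,\sigma)})$.
   Context: $\mathbb{T}^n$ is the monoid of power-products in $x_1,\dots,x_n$. For $f\in P$, $\operatorname{den}(f)$ is the positive lcm of the denominators of its coefficients; $\operatorname{den}(G)$ is the lcm of $\operatorname{den}(g)$, $g\in G$. For a term ordering $\rho$ with $G_\rho$ the reduced $\rho$-Gröbner basis of $I$, $p$ is $\rho$-good for $I$ if $p\nmid\operatorname{den}(G_\rho)$ and $\rho$-bad otherwise. For $\sigma$-good $p$, $\pi_p$ is coefficientwise reduction modulo $p$ into $\mathbb{F}_p[x_1,\dots,x_n]$, and $I_{(p,\sigma)}$ is the ideal of $\mathbb{F}_p[x_1,\dots,x_n]$ generated by $\pi_p(G_\sigma)$. A tuple $(t_1,\dots,t_r)$ of distinct power-products is $\tau$-ordered if $t_1<_\tau\cdots<_\tau t_r$. For an ideal $J$ in a polynomial ring over a field, $O_\tau(J)$ is the $\tau$-ordered tuple of the leading terms of a minimal $\tau$-Gröbner basis of $J$ (the minimal power-product generators of $\mathrm{LT}_\tau(J)$). For $\tau$-ordered tuples $T=(t_1,\dots,t_r)$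 and $T'=(t'_1,\dots,t'_{r'})$, $T'\prec_\tau T$ means either $T$ is a proper prefix of $T'$ (i.e. $r<r'$ and $t_i=t'_i$ for $i\le r$), or there is $k\le\min(r,r')$ with $t_i=t'_i$ for $i<k$ and $t'_k<_\tau t_k$. *)

theory Defs
  imports "HOL-Library.Poly_Mapping" "Berlekamp_Zassenhaus.Finite_Field"
begin

text \<open>Power-products in the variables of a finite type 'x are exponent vectors
  'x =>0 nat (monoid operation +, unit 0); polynomials with coefficients in 'a
  are finitely supported maps from power-products to coefficients.\<close>

type_synonym 'x pp = "'x \<Rightarrow>\<^sub>0 nat"
type_synonym ('x, 'a) mpoly = "'x pp \<Rightarrow>\<^sub>0 'a"

definition pp_dvd :: "'x pp \<Rightarrow> 'x pp \<Rightarrow> bool" where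
  "pp_dvd s t \<longleftrightarrow> (\<exists>u. t = s + u)"

definition term_order :: "('x pp \<Rightarrow> 'x pp \<Rightarrow> bool) \<Rightarrow> bool" where
  "term_order ord \<longleftrightarrow>
     (\<forall>s. ord s s) \<and> (\<forall>s t. ord s t \<and> ord t s \<longrightarrow> s = t) \<and>
     (\<forall>s t u. ord s t \<and> ord t u \<longrightarrow> ord s u) \<and> (\<forall>s t. ord s t \<or> ord t s) \<and>
     (\<forall>t. ord 0 t) \<and> (\<forall>s t u. ord s t \<longrightarrow> ord (s + u) (t + u))"

definition is_ideal :: "('x, 'a::comm_ring_1) mpoly set \<Rightarrow> bool" where
  "is_ideal J \<longleftrightarrow> 0 \<in> J \<and> (\<forall>a\<in>J. \<forall>b\<in>J. a + b \<in> J) \<and> (\<forall>a\<in>J. \<forall>r. r * a \<in> J)"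

definition ideal_gen :: "('x, 'a::comm_ring_1) mpoly set \<Rightarrow> ('x, 'a) mpoly set" where
  "ideal_gen G = \<Inter>{J. is_ideal J \<and> G \<subseteq> J}"

definition lt :: "('x pp \<Rightarrow> 'x pp \<Rightarrow> bool) \<Rightarrow> ('x, 'a::zero) mpoly \<Rightarrow> 'x pp" where
  "lt ord f = (THE t. t \<in> Poly_Mapping.keys f \<and> (\<forall>s\<in>Poly_Mapping.keys f. ord s t))"

definition lc :: "('x pp \<Rightarrow> 'x pp \<Rightarrow> bool) \<Rightarrow> ('x, 'a::zero) mpoly \<Rightarrow> 'a" where
  "lc ord f = Poly_Mapping.lookup f (lt ord f)"

definition LTs :: "('x pp \<Rightarrow> 'x pp \<Rightarrow> bool) \<Rightarrow> ('x, 'a::zero) mpoly set \<Rightarrow> 'x pp set" where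
  "LTs ord J = {lt ord f | f. f \<in> J \<and> f \<noteq> 0}"

definition is_GB :: "('x pp \<Rightarrow> 'x pp \<Rightarrow> bool) \<Rightarrow> ('x, 'a::field) mpoly set
    \<Rightarrow> ('x, 'a) mpoly set \<Rightarrow> bool" where
  "is_GB ord J G \<longleftrightarrow> finite G \<and> G \<subseteq> J \<and> ideal_gen G = J \<and>
     (\<forall>f\<in>J. f \<noteq> 0 \<longrightarrow> (\<exists>g\<in>G. g \<noteq> 0 \<and> pp_dvd (lt ord g) (lt ord f)))"

definition is_reduced_GB :: "('x pp \<Rightarrow> 'x pp \<Rightarrow> bool) \<Rightarrow> ('x, 'a::field) mpoly set
    \<Rightarrow> ('x, 'a) mpoly set \<Rightarrow> bool" where
  "is_reduced_GB ord J G \<longleftrightarrow> is_GB ord J G \<and> 0 \<notin> G \<and>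
     (\<forall>g\<in>G. lc ord g = 1) \<and>
     (\<forall>g\<in>G. \<forall>g'\<in>G. g \<noteq> g' \<longrightarrow> (\<forall>t\<in>Poly_Mapping.keys g. \<not> pp_dvd (lt ord g') t))"

definition den_rat :: "rat \<Rightarrow> int" where
  "den_rat c = snd (quotient_of c)"

definition den_poly :: "('x, rat) mpoly \<Rightarrow> int" where
  "den_poly f = Lcm (den_rat ` range (Poly_Mapping.lookup f))"

definition den_set :: "('x, rat) mpoly set \<Rightarrow> int" where
  "den_set G = Lcm (den_poly ` G)"

definition good :: "('x, rat) mpoly set \<Rightarrow> nat \<Rightarrow> bool" where
  "good G p \<longleftrightarrow> \<not> (int p dvd den_set G)"

text \<open>Coefficientwise reduction modulo p = CARD('p) into F_p.\<close>
definition red_rat :: "rat \<Rightarrow> 'p::prime_card mod_ring" where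
  "red_rat c = of_int (fst (quotient_of c)) / of_int (snd (quotient_of c))"

definition red_poly :: "('x, rat) mpoly \<Rightarrow> ('x, 'p::prime_card mod_ring) mpoly" where
  "red_poly f = Poly_Mapping.map red_rat f"

definition min_gens :: "('x pp \<Rightarrow> 'x pp \<Rightarrow> bool) \<Rightarrow> ('x, 'a::zero) mpoly set \<Rightarrow> 'x pp set" where
  "min_gens ord J = {t \<in> LTs ord J. \<forall>s\<in>LTs ord J. pp_dvd s t \<longrightarrow> s = t}"

definition O_tuple :: "('x pp \<Rightarrow> 'x pp \<Rightarrow> bool) \<Rightarrow> ('x, 'a::zero) mpoly set \<Rightarrow> 'x pp list" where
  "O_tuple ord J = (THE xs. set xs = min_gens ord J \<and> sorted_wrt (\<lambda>s t. ord s t \<and> s \<noteq> t) xs)"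

definition proper_prefix_of :: "'b list \<Rightarrow> 'b list \<Rightarrow> bool" where
  "proper_prefix_of T T' \<longleftrightarrow> length T < length T' \<and> take (length T) T' = T"

text \<open>tuple_less ord T' T  means  T' \<prec> T.\<close>
definition tuple_less :: "('x pp \<Rightarrow> 'x pp \<Rightarrow> bool) \<Rightarrow> 'x pp list \<Rightarrow> 'x pp list \<Rightarrow> bool" where
  "tuple_less ord T' T \<longleftrightarrow> proper_prefix_of T T' \<or>
     (\<exists>k < min (length T) (length T'). take k T' = take k T \<and>
        ord (T' ! k) (T ! k) \<and> T' ! k \<noteq> T ! k)"

end

(*
  Reduction modulo p commutes with division by monic p-integral polynomials. Hence, if G_sigma
  is p-integral, I_(p,sigma) consists of the reductions of the p-integral elements of I. If
  G_tau is p-integral too, its elements reduce to monic elements of I_(p,sigma) with the same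
  leading terms, and division by G_tau shows that the leading term of any nonzero reduction is
  a leading term of I; so LT_tau(I_(p,sigma)) = LT_tau(I), which gives (a).

  If p is tau-bad, let g in G_tau be non-p-integral with tau-least leading term t. The argument
  above still shows that every leading term of I below t is one of I_(p,sigma). Reducing the
  least p-power multiple of g that is p-integral yields an element of I_(p,sigma) whose leading
  term is a tail term of g: it lies below t but not in LT_tau(I), as G_tau is reduced. The
  tau-least element m of LT_tau(I_(p,sigma)) - LT_tau(I) is therefore a minimal generator of
  LT_tau(I_(p,sigma)) only, the two sets of minimal generators agree below m, and t > m is a
  minimal generator of LT_tau(I): the tuples first differ where O_tau(I_(p,sigma)) has m and
  O_tau(I) has a larger entry, which gives (b).
*)

theory Submission
  imports Defs "HOL-Library.Ramsey"
begin

section \<open>Power-products and term orders\<close>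

lemma pp_dvd_trans: "pp_dvd s t \<Longrightarrow> pp_dvd t u \<Longrightarrow> pp_dvd s u"
  unfolding pp_dvd_def by (metis add.assoc)

lemma pp_dvd_antisym:
  fixes s t :: "'x pp"
  assumes "pp_dvd s t" and "pp_dvd t s"
  shows "s = t"
proof -
  obtain u v where t: "t = s + u" and s: "s = t + v"
    using assms unfolding pp_dvd_def by blast
  have "s + (u + v) = s + 0"
    using s t by (simp add: add.assoc)
  hence "u + v = 0"
    by (rule add_left_imp_eq)
  hence "u = 0"
    by (metis add_is_0 lookup_add lookup_zero poly_mapping_eqI)
  thus ?thesis
    using t by simp
qed

definition term_less :: "('x pp \<Rightarrow> 'x pp \<Rightarrow> bool) \<Rightarrow> ('x pp \<times> 'x pp) set" where
  "term_less ord = {(s, t). ord s t \<and> s \<noteq> t}"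

context
  fixes ord :: "'x pp \<Rightarrow> 'x pp \<Rightarrow> bool"
  assumes to: "term_order ord"
begin

lemma term_order_refl: "ord s s"
  using to unfolding term_order_def by blast

lemma term_order_antisym: "ord s t \<Longrightarrow> ord t s \<Longrightarrow> s = t"
  using to unfolding term_order_def by blast

lemma term_order_trans: "ord s t \<Longrightarrow> ord t u \<Longrightarrow> ord s u"
  using to unfolding term_order_def by blast

lemma term_order_total: "ord s t \<or> ord t s"
  using to unfolding term_order_def by blast

lemma term_order_add_left: "ord s t \<Longrightarrow> ord (u + s) (u + t)"
  using to unfolding term_order_def by (metis add.commute)

lemma term_order_pp_dvd: "pp_dvd s t \<Longrightarrow> ord s t"
  using to unfolding term_order_def pp_dvd_def by (metis add.commute add_0)

lemma term_order_linorder: "class.linorder ord (\<lambda>s t. ord s t \<and> s \<noteq> t)"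
  by unfold_locales
    (use term_order_refl term_order_antisym term_order_trans term_order_total in blast)+

lemma term_less_iff: "(s, t) \<in> term_less ord \<longleftrightarrow> \<not> ord t s"
  unfolding term_less_def using term_order_refl term_order_antisym term_order_total by blast

lemma term_less_trans: "(s, t) \<in> term_less ord \<Longrightarrow> (t, u) \<in> term_less ord \<Longrightarrow> (s, u) \<in> term_less ord"
  unfolding term_less_iff using term_order_trans term_order_total by blast

end

section \<open>Dickson's lemma\<close>

lemma not_strictly_decreasing_on_infinite:
  fixes g :: "nat \<Rightarrow> nat"
  assumes "infinite Y"
  shows "\<not> (\<forall>i\<in>Y. \<forall>j\<in>Y. i < j \<longrightarrow> g j < g i)"
proof
  assume dec: "\<forall>i\<in>Y. \<forall>j\<in>Y. i < j \<longrightarrow> g j < g i"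
  obtain i0 where i0: "i0 \<in> Y"
    using assms by (metis finite.emptyI ex_in_conv)
  let ?Z = "{j\<in>Y. i0 < j}"
  have "inj_on g ?Z"
    by (rule inj_onI) (metis (no_types, lifting) dec mem_Collect_eq nat_neq_iff)
  moreover have "g ` ?Z \<subseteq> {..<g i0}"
    using dec i0 by auto
  ultimately have "finite ?Z"
    by (meson finite_imageD finite_lessThan finite_subset)
  moreover have "Y \<subseteq> {..i0} \<union> ?Z"
    by auto
  ultimately show False
    using assms by (meson finite_Un finite_atMost finite_subset)
qed

lemma infinite_subset_mono:
  fixes g :: "nat \<Rightarrow> nat"
  assumes "infinite Y"
  obtains Y' where "Y' \<subseteq> Y" and "infinite Y'" and "\<And>i j. i \<in> Y' \<Longrightarrow> j \<in> Y' \<Longrightarrow> i < j \<Longrightarrow> g i \<le> g j"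
proof -
  define colour where "colour X = (if g (Min X) \<le> g (Max X) then 0 else 1::nat)" for X
  have "\<forall>x\<in>Y. \<forall>y\<in>Y. x \<noteq> y \<longrightarrow> colour {x, y} < 2"
    by (simp add: colour_def)
  from Ramsey2[OF assms this] obtain Y' c where Y': "Y' \<subseteq> Y" "infinite Y'"
    "\<forall>x\<in>Y'. \<forall>y\<in>Y'. x \<noteq> y \<longrightarrow> colour {x, y} = c"
    by blast
  have colour_pair: "c = (if g i \<le> g j then 0 else 1)" if "i \<in> Y'" "j \<in> Y'" "i < j" for i j
  proof -
    have "Min {i, j} = i" "Max {i, j} = j"
      using that(3) by auto
    hence "colour {i, j} = (if g i \<le> g j then 0 else 1)"
      unfolding colour_def by simp
    moreover have "colour {i, j} = c"
      using Y'(3)[rule_format, of i j] that by simp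
    ultimately show ?thesis
      by simp
  qed
  show thesis
  proof (cases "c = 0")
    case True
    thus thesis
      using that[OF Y'(1,2)] colour_pair by (metis zero_neq_one)
  next
    case False
    hence "\<forall>i\<in>Y'. \<forall>j\<in>Y'. i < j \<longrightarrow> g j < g i"
      using colour_pair by (metis not_le)
    thus thesis
      using not_strictly_decreasing_on_infinite[OF Y'(2)] by blast
  qed
qed

lemma infinite_subset_coordinatewise_mono:
  fixes F :: "nat \<Rightarrow> 'x pp"
  assumes "finite V" and "infinite Z"
  shows "\<exists>Y\<subseteq>Z. infinite Y \<and>
    (\<forall>i\<in>Y. \<forall>j\<in>Y. i < j \<longrightarrow> (\<forall>v\<in>V. Poly_Mapping.lookup (F i) v \<le> Poly_Mapping.lookup (F j) v))"
  using assms
proof (induction V arbitrary: Z rule: finite_induct)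
  case empty
  then show ?case
    by (intro exI[of _ Z]) simp
next
  case (insert v V)
  obtain Y where Y: "Y \<subseteq> Z" "infinite Y"
    "\<forall>i\<in>Y. \<forall>j\<in>Y. i < j \<longrightarrow> (\<forall>v\<in>V. Poly_Mapping.lookup (F i) v \<le> Poly_Mapping.lookup (F j) v)"
    using insert.IH[OF insert.prems] by blast
  obtain Y' where "Y' \<subseteq> Y" "infinite Y'"
    "\<And>i j. i \<in> Y' \<Longrightarrow> j \<in> Y' \<Longrightarrow> i < j \<Longrightarrow> Poly_Mapping.lookup (F i) v \<le> Poly_Mapping.lookup (F j) v"
    using infinite_subset_mono[OF Y(2), of "\<lambda>i. Poly_Mapping.lookup (F i) v"] by blast
  thus ?case
    using Y by (intro exI[of _ Y']) blast
qed

lemma dickson: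
  fixes F :: "nat \<Rightarrow> ('x::finite) pp"
  shows "\<exists>i j. i < j \<and> pp_dvd (F i) (F j)"
proof -
  obtain Y where Y: "infinite Y"
    "\<forall>i\<in>Y. \<forall>j\<in>Y. i < j \<longrightarrow> (\<forall>v\<in>UNIV. Poly_Mapping.lookup (F i) v \<le> Poly_Mapping.lookup (F j) v)"
    using infinite_subset_coordinatewise_mono[where V=UNIV and Z="UNIV :: nat set" and F=F]
    by auto
  obtain i where "i \<in> Y"
    using Y(1) by (metis finite.emptyI ex_in_conv)
  then obtain j where ij: "i \<in> Y" "j \<in> Y" "i < j"
    using Y(1) unfolding infinite_nat_iff_unbounded by blast
  hence "F j = F i + (F j - F i)"
    using Y(2) by (intro poly_mapping_eqI) (simp add: lookup_add lookup_minus)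
  thus ?thesis
    using ij unfolding pp_dvd_def by blast
qed

lemma wf_term_less:
  fixes ord :: "('x::finite) pp \<Rightarrow> 'x pp \<Rightarrow> bool"
  assumes to: "term_order ord"
  shows "wf (term_less ord)"
proof (rule ccontr)
  assume "\<not> wf (term_less ord)"
  then obtain f where f: "\<And>i. \<not> ord (f i) (f (Suc i))"
    unfolding wf_iff_no_infinite_down_chain term_less_iff[OF to] by blast
  have descending: "\<not> ord (f i) (f j)" if "i < j" for i j
    using that
  proof (induction j)
    case (Suc j)
    show ?case
    proof (cases "i = j")
      case False
      hence "\<not> ord (f i) (f j)"
        using Suc by simp
      thus ?thesis
        using f[of j] term_order_total[OF to] term_order_trans[OF to] by blast
    qed (use f in simp)
  qed simp
  obtain i j where "i < j" "pp_dvd (f i) (f j)"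
    using dickson by blast
  thus False
    using descending term_order_pp_dvd[OF to] by blast
qed

lemma finite_pp_antichain:
  fixes S :: "('x::finite) pp set"
  assumes "\<forall>s\<in>S. \<forall>t\<in>S. pp_dvd s t \<longrightarrow> s = t"
  shows "finite S"
proof (rule ccontr)
  assume "infinite S"
  then obtain F :: "nat \<Rightarrow> _" where F: "inj F" "range F \<subseteq> S"
    using infinite_countable_subset by blast
  obtain i j where "i < j" "pp_dvd (F i) (F j)"
    using dickson by blast
  hence "F i = F j"
    using assms F(2) by blast
  thus False
    using F(1) \<open>i < j\<close> by (simp add: inj_eq)
qed

section \<open>Leading terms\<close>

lemma lookup_monom_mult:
  fixes g :: "('x, 'a::comm_semiring_1) mpoly"
  shows "Poly_Mapping.lookup (Poly_Mapping.single u c * g) (u + t) = c * Poly_Mapping.lookup g t"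
proof -
  have shift: "Poly_Mapping.lookup (Poly_Mapping.single u 1 * h) (u + t) = Poly_Mapping.lookup h t"
    for h :: "('x, 'a) mpoly"
  proof -
    have "Poly_Mapping.lookup (Poly_Mapping.single u 1 * h) (u + t)
        = (\<Sum>l. ((\<Sum>q. Poly_Mapping.lookup h q when u + t = l + q) when u = l))"
      unfolding lookup_mult lookup_single by (rule Sum_any.cong) (simp add: when_def)
    also have "\<dots> = (\<Sum>q. Poly_Mapping.lookup h q when t = q)"
      by (subst Sum_any_when_equal') simp
    also have "\<dots> = Poly_Mapping.lookup h t"
      by (rule Sum_any_when_equal')
    finally show ?thesis .
  qed
  have "Poly_Mapping.single u c * g = Poly_Mapping.single u 1 * (Poly_Mapping.single 0 c * g)"
    by (simp add: mult_single flip: mult.assoc)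
  also have "Poly_Mapping.single 0 c * g = Poly_Mapping.map ((*) c) g"
    by (simp add: mult_map_scale_conv_mult)
  finally show ?thesis
    by (simp add: shift map.rep_eq when_def)
qed

lemma keys_monom_mult_subset:
  fixes g :: "('x, 'a::comm_semiring_1) mpoly"
  shows "Poly_Mapping.keys (Poly_Mapping.single u c * g) \<subseteq> (+) u ` Poly_Mapping.keys g"
  using keys_mult[of "Poly_Mapping.single u c" g] by (auto split: if_splits)

lemma lookup_monom_mult_notin:
  fixes g :: "('x, 'a::comm_semiring_1) mpoly"
  assumes "\<nexists>t. k = u + t"
  shows "Poly_Mapping.lookup (Poly_Mapping.single u c * g) k = 0"
  using keys_monom_mult_subset[of u c g] assms by (auto simp: in_keys_iff)

context
  fixes ord :: "'x pp \<Rightarrow> 'x pp \<Rightarrow> bool"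
  assumes to: "term_order ord"
begin

lemma lt_eqI:
  "t \<in> Poly_Mapping.keys f \<Longrightarrow> (\<And>s. s \<in> Poly_Mapping.keys f \<Longrightarrow> ord s t) \<Longrightarrow> lt ord f = t"
  unfolding lt_def by (rule the_equality) (use term_order_antisym[OF to] in blast)+

lemma lt_greatest_key:
  assumes "f \<noteq> 0"
  shows "lt ord f \<in> Poly_Mapping.keys f" and "s \<in> Poly_Mapping.keys f \<Longrightarrow> ord s (lt ord f)"
proof -
  have ne: "Poly_Mapping.keys f \<noteq> {}"
    using assms by simp
  note Max_in = linorder.Max_in[OF term_order_linorder[OF to] finite_keys ne]
  note Max_ge = linorder.Max_ge[OF term_order_linorder[OF to] finite_keys]
  have "lt ord f = linorder.Max ord (Poly_Mapping.keys f)"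
    using Max_in Max_ge by (intro lt_eqI) auto
  thus "lt ord f \<in> Poly_Mapping.keys f" and "s \<in> Poly_Mapping.keys f \<Longrightarrow> ord s (lt ord f)"
    using Max_in Max_ge by auto
qed

lemma lt_in_keys: "f \<noteq> 0 \<Longrightarrow> lt ord f \<in> Poly_Mapping.keys f"
  by (rule lt_greatest_key)

lemma lt_max:
  assumes "s \<in> Poly_Mapping.keys f"
  shows "ord s (lt ord f)"
proof -
  have "f \<noteq> 0"
    using assms by auto
  thus ?thesis
    using lt_greatest_key(2) assms by blast
qed

lemma lc_nonzero: "f \<noteq> 0 \<Longrightarrow> lc ord f \<noteq> 0"
  using lt_in_keys unfolding lc_def by (simp add: in_keys_iff)

lemma lt_monom_mult:
  fixes g :: "('x, 'a::field) mpoly"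
  assumes "c \<noteq> 0" and "g \<noteq> 0"
  shows "Poly_Mapping.single u c * g \<noteq> 0" and "lt ord (Poly_Mapping.single u c * g) = u + lt ord g"
proof -
  have "Poly_Mapping.lookup (Poly_Mapping.single u c * g) (u + lt ord g) \<noteq> 0"
    using assms lc_nonzero[OF assms(2)] by (simp add: lookup_monom_mult lc_def)
  hence key: "u + lt ord g \<in> Poly_Mapping.keys (Poly_Mapping.single u c * g)"
    by (simp add: in_keys_iff)
  thus "Poly_Mapping.single u c * g \<noteq> 0"
    by auto
  show "lt ord (Poly_Mapping.single u c * g) = u + lt ord g"
    using key keys_monom_mult_subset[of u c g] lt_max term_order_add_left[OF to]
    by (intro lt_eqI) blast+
qed

lemma lt_reduction_step:
  fixes f g :: "('x, 'a::field) mpoly"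
  assumes "f \<noteq> 0" and "g \<noteq> 0" and "lc ord g = 1" and "lt ord f = lt ord g + u"
    and nz: "f - Poly_Mapping.single u (lc ord f) * g \<noteq> 0"
  shows "(lt ord (f - Poly_Mapping.single u (lc ord f) * g), lt ord f) \<in> term_less ord"
proof -
  let ?h = "Poly_Mapping.single u (lc ord f) * g"
  have lt_h: "lt ord ?h = lt ord f"
    using lt_monom_mult(2)[OF lc_nonzero[OF assms(1)] assms(2)] assms(4) by (simp add: add.commute)
  have "Poly_Mapping.lookup ?h (lt ord f) = lc ord f"
    using lookup_monom_mult[of u "lc ord f" g "lt ord g"] assms(3,4)
    by (simp add: lc_def add.commute)
  hence cancel: "Poly_Mapping.lookup (f - ?h) (lt ord f) = 0"
    by (simp add: lookup_minus lc_def)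
  have "lt ord (f - ?h) \<in> Poly_Mapping.keys f \<union> Poly_Mapping.keys ?h"
    by (rule subsetD[OF keys_diff lt_in_keys[OF nz]])
  hence "ord (lt ord (f - ?h)) (lt ord f)"
    using lt_max[of "lt ord (f - ?h)" f] lt_max[of "lt ord (f - ?h)" ?h] lt_h by auto
  moreover have "lt ord (f - ?h) \<noteq> lt ord f"
    using lt_in_keys[OF nz] cancel by (auto simp: in_keys_iff)
  ultimately show ?thesis
    unfolding term_less_def by blast
qed

end

section \<open>Ideals and reduced Groebner bases\<close>

lemma is_ideal_ideal_gen: "is_ideal (ideal_gen G)"
  unfolding ideal_gen_def is_ideal_def by blast

lemma ideal_gen_superset: "G \<subseteq> ideal_gen G"
  unfolding ideal_gen_def by blast

lemma ideal_gen_least: "is_ideal J \<Longrightarrow> G \<subseteq> J \<Longrightarrow> ideal_gen G \<subseteq> J"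
  unfolding ideal_gen_def by blast

lemma ideal_zero: "is_ideal J \<Longrightarrow> 0 \<in> J"
  unfolding is_ideal_def by blast

lemma ideal_add: "is_ideal J \<Longrightarrow> a \<in> J \<Longrightarrow> b \<in> J \<Longrightarrow> a + b \<in> J"
  unfolding is_ideal_def by blast

lemma ideal_mult: "is_ideal J \<Longrightarrow> a \<in> J \<Longrightarrow> r * a \<in> J"
  unfolding is_ideal_def by blast

lemma ideal_diff: "is_ideal J \<Longrightarrow> a \<in> J \<Longrightarrow> b \<in> J \<Longrightarrow> a - b \<in> J"
  using ideal_add[of J a "(- 1) * b"] ideal_mult[of J b "- 1"] by simp

lemma LTsI: "f \<in> J \<Longrightarrow> f \<noteq> 0 \<Longrightarrow> lt ord f \<in> LTs ord J"
  unfolding LTs_def by blast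

lemma LTs_pp_dvd:
  fixes J :: "('x, 'a::field) mpoly set"
  assumes to: "term_order ord" and J: "is_ideal J" and "s \<in> LTs ord J" and "pp_dvd s t"
  shows "t \<in> LTs ord J"
proof -
  obtain f where f: "f \<in> J" "f \<noteq> 0" "s = lt ord f"
    using assms(3) unfolding LTs_def by blast
  obtain u where t: "t = u + s"
    using assms(4) unfolding pp_dvd_def by (auto simp: add.commute)
  have "Poly_Mapping.single u 1 * f \<in> J"
    by (rule ideal_mult[OF J f(1)])
  thus ?thesis
    using LTsI lt_monom_mult[OF to one_neq_zero f(2), of u] f(3) t by metis
qed

lemma reduced_GB_not_pp_dvd:
  assumes "is_reduced_GB ord I G" and "g \<in> G" and "g' \<in> G" and "g \<noteq> g'"
    and "t \<in> Poly_Mapping.keys g"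
  shows "\<not> pp_dvd (lt ord g') t"
  using assms unfolding is_reduced_GB_def by blast

lemma reduced_GB_divisor:
  assumes "is_reduced_GB ord I G" and "f \<in> I" and "f \<noteq> 0"
  obtains g u where "g \<in> G" "g \<in> I" "g \<noteq> 0" "lc ord g = 1" "lt ord f = lt ord g + u"
  using assms unfolding is_reduced_GB_def is_GB_def pp_dvd_def by blast

context
  fixes ord :: "'x pp \<Rightarrow> 'x pp \<Rightarrow> bool" and I G :: "('x, 'a::field) mpoly set"
  assumes to: "term_order ord" and GB: "is_reduced_GB ord I G"
begin

lemma reduced_GB_key_notin_LTs:
  assumes g: "g \<in> G" and t: "t \<in> Poly_Mapping.keys g" "t \<noteq> lt ord g"
  shows "t \<notin> LTs ord I"
proof
  assume "t \<in> LTs ord I"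
  then obtain f where "f \<in> I" "f \<noteq> 0" "t = lt ord f"
    unfolding LTs_def by blast
  then obtain g' u where g': "g' \<in> G" "t = lt ord g' + u"
    using reduced_GB_divisor[OF GB] by metis
  show False
  proof (cases "g' = g")
    case True
    hence "ord (lt ord g) t"
      using g' term_order_pp_dvd[OF to] unfolding pp_dvd_def by blast
    thus False
      using t lt_max[OF to] term_order_antisym[OF to] by blast
  next
    case False
    hence "\<not> pp_dvd (lt ord g') t"
      using reduced_GB_not_pp_dvd[OF GB g g'(1) _ t(1)] by metis
    thus False
      using g'(2) unfolding pp_dvd_def by blast
  qed
qed

lemma reduced_GB_lt_min_gens:
  assumes g: "g \<in> G"
  shows "lt ord g \<in> min_gens ord I"
proof -
  have g_nz: "g \<noteq> 0" and "g \<in> I"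
    using GB g unfolding is_reduced_GB_def is_GB_def by auto
  hence "lt ord g \<in> LTs ord I"
    by (rule LTsI[rotated])
  moreover have "v = lt ord g" if v: "v \<in> LTs ord I" "pp_dvd v (lt ord g)" for v
  proof -
    obtain f where "f \<in> I" "f \<noteq> 0" "v = lt ord f"
      using v(1) unfolding LTs_def by blast
    then obtain g' u where g': "g' \<in> G" "v = lt ord g' + u"
      using reduced_GB_divisor[OF GB] by metis
    hence "pp_dvd (lt ord g') (lt ord g)"
      using v(2) pp_dvd_trans unfolding pp_dvd_def by blast
    hence "g' = g"
      using reduced_GB_not_pp_dvd[OF GB g g'(1) _ lt_in_keys[OF to g_nz]] by metis
    thus ?thesis
      using g' v(2) pp_dvd_antisym unfolding pp_dvd_def by blast
  qed
  ultimately show ?thesis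
    unfolding min_gens_def by blast
qed

end

section \<open>\<open>p\<close>-integral rationals and their reduction modulo \<open>p\<close>\<close>

definition p_integral :: "nat \<Rightarrow> rat \<Rightarrow> bool" where
  "p_integral p q \<longleftrightarrow> \<not> int p dvd den_rat q"

lemma den_rat_dvd:
  assumes "d \<noteq> 0" and "q = of_int n / of_int d"
  shows "den_rat q dvd d"
proof -
  obtain n' d' where q: "quotient_of q = (n', d')"
    by (metis prod.exhaust)
  hence "d' > 0" "coprime n' d'" "q = of_int n' / of_int d'"
    by (simp_all add: quotient_of_denom_pos quotient_of_coprime quotient_of_div)
  hence "n * d' = n' * d"
    using assms by (simp add: frac_eq_eq flip: of_int_mult of_int_eq_iff)
  hence "d' dvd n' * d"
    by (metis dvd_triv_right)
  hence "d' dvd d"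
    using \<open>coprime n' d'\<close> by (simp add: coprime_commute coprime_dvd_mult_right_iff)
  thus ?thesis
    using q by (simp add: den_rat_def)
qed

lemma p_integral_iff_fraction:
  "p_integral p q \<longleftrightarrow> (\<exists>n d. \<not> int p dvd d \<and> q = of_int n / of_int d)"
proof
  assume "p_integral p q"
  thus "\<exists>n d. \<not> int p dvd d \<and> q = of_int n / of_int d"
    unfolding p_integral_def den_rat_def
    by (metis prod.collapse quotient_of_div)
next
  assume "\<exists>n d. \<not> int p dvd d \<and> q = of_int n / of_int d"
  then obtain n d where "\<not> int p dvd d" "q = of_int n / of_int d"
    by blast
  moreover have "d \<noteq> 0"
    using calculation by auto
  ultimately show "p_integral p q"
    unfolding p_integral_def using den_rat_dvd dvd_trans by blast
qed

lemma p_integral_fractionE: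
  assumes "p_integral p q"
  obtains n d where "\<not> int p dvd d" "q = of_int n / of_int d"
  using assms unfolding p_integral_iff_fraction by blast

lemma p_integral_of_int: "p \<noteq> 1 \<Longrightarrow> p_integral p (of_int k)"
  unfolding p_integral_iff_fraction by (rule exI[of _ k], rule exI[of _ 1]) simp

lemma p_integral_0: "p \<noteq> 1 \<Longrightarrow> p_integral p 0"
  using p_integral_of_int[of p 0] by simp

lemma p_integral_add:
  assumes "prime p" and "p_integral p a" and "p_integral p b"
  shows "p_integral p (a + b)"
proof -
  obtain n d n' d' where nd: "\<not> int p dvd d" "a = of_int n / of_int d"
    and nd': "\<not> int p dvd d'" "b = of_int n' / of_int d'"
    using assms(2,3) by (metis p_integral_fractionE)
  have "d \<noteq> 0" "d' \<noteq> 0"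
    using nd nd' by auto
  hence "a + b = of_int (n * d' + n' * d) / of_int (d * d')"
    using nd nd' by (simp add: field_simps)
  moreover have "\<not> int p dvd d * d'"
    using nd nd' assms(1) by (simp add: prime_dvd_mult_iff)
  ultimately show ?thesis
    unfolding p_integral_iff_fraction by blast
qed

lemma p_integral_mult:
  assumes "prime p" and "p_integral p a" and "p_integral p b"
  shows "p_integral p (a * b)"
proof -
  obtain n d n' d' where nd: "\<not> int p dvd d" "a = of_int n / of_int d"
    and nd': "\<not> int p dvd d'" "b = of_int n' / of_int d'"
    using assms(2,3) by (metis p_integral_fractionE)
  hence "a * b = of_int (n * n') / of_int (d * d')"
    by simp
  moreover have "\<not> int p dvd d * d'"
    using nd nd' assms(1) by (simp add: prime_dvd_mult_iff)
  ultimately show ?thesis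
    unfolding p_integral_iff_fraction by blast
qed

lemma p_integral_uminus: "p_integral p a \<Longrightarrow> p_integral p (- a)"
  unfolding p_integral_iff_fraction by (metis minus_divide_left of_int_minus)

lemma p_integral_diff:
  "prime p \<Longrightarrow> p_integral p a \<Longrightarrow> p_integral p b \<Longrightarrow> p_integral p (a - b)"
  using p_integral_add[of p a "- b"] p_integral_uminus[of p b] by simp

lemma p_integral_power_mult:
  assumes "prime p" and "p_integral p a"
  shows "p_integral p (of_nat p ^ k * a)"
  using p_integral_mult[OF assms(1) p_integral_of_int[of p "int p ^ k"] assms(2)] assms(1)
  by (simp add: prime_nat_iff)

lemma p_integral_power_mult_exists:
  assumes "prime p"
  shows "\<exists>e. p_integral p (of_nat p ^ e * q)"
proof -
  obtain n d where q: "quotient_of q = (n, d)"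
    by (metis prod.exhaust)
  hence "d > 0" and q_eq: "q = of_int n / of_int d"
    by (simp_all add: quotient_of_denom_pos quotient_of_div)
  define k where "k = multiplicity (int p) d"
  obtain d' where d': "d = int p ^ k * d'" "\<not> int p dvd d'"
    using assms \<open>d > 0\<close> unfolding k_def
    by (metis multiplicity_decompose' not_prime_unit prime_nat_int_transfer less_irrefl)
  have "p > 0"
    using assms by (rule prime_gt_0_nat)
  have "q = of_int n / (of_nat p ^ k * of_int d')"
    using q_eq d'(1) by simp
  hence "of_nat p ^ k * q = of_int n / of_int d'"
    using \<open>p > 0\<close> by simp
  thus ?thesis
    using d'(2) unfolding p_integral_iff_fraction by blast
qed

lemma card_prime_card_neq_1: "CARD('p::prime_card) \<noteq> 1"
  using prime_card[where 'a='p] by auto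

lemma of_int_mod_ring_eq_0_iff:
  "(of_int k :: 'p::prime_card mod_ring) = 0 \<longleftrightarrow> int CARD('p) dvd k"
  by (simp add: of_int_eq_0_iff_char_dvd)

lemma red_rat_fraction:
  assumes "\<not> int CARD('p::prime_card) dvd d"
  shows "(red_rat (of_int n / of_int d) :: 'p mod_ring) = of_int n / of_int d"
proof -
  let ?q = "of_int n / of_int d :: rat"
  obtain n' d' where q: "quotient_of ?q = (n', d')"
    by (metis prod.exhaust)
  have "d \<noteq> 0"
    using assms by auto
  have "?q = of_int n' / of_int d'" "d' > 0"
    using q by (simp_all add: quotient_of_div quotient_of_denom_pos)
  hence cross: "n * d' = n' * d"
    using \<open>d \<noteq> 0\<close> by (simp add: frac_eq_eq flip: of_int_mult of_int_eq_iff)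
  have "d' dvd d"
    using den_rat_dvd[OF \<open>d \<noteq> 0\<close>, of ?q n] q by (simp add: den_rat_def)
  hence "(of_int d' :: 'p mod_ring) \<noteq> 0" "(of_int d :: 'p mod_ring) \<noteq> 0"
    using assms dvd_trans by (auto simp: of_int_mod_ring_eq_0_iff)
  moreover have "(of_int n * of_int d' :: 'p mod_ring) = of_int n' * of_int d"
    by (metis cross of_int_mult)
  ultimately show ?thesis
    unfolding red_rat_def q by (simp add: frac_eq_eq)
qed

lemma red_rat_of_int: "(red_rat (of_int k) :: 'p::prime_card mod_ring) = of_int k"
  using red_rat_fraction[of 1 k, where 'p='p] card_prime_card_neq_1[where 'p='p] by simp

lemma red_rat_0: "(red_rat 0 :: 'p::prime_card mod_ring) = 0"
  using red_rat_of_int[of 0] by simp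

lemma red_rat_1: "(red_rat 1 :: 'p::prime_card mod_ring) = 1"
  using red_rat_of_int[of 1] by simp

lemma red_rat_to_int_mod_ring:
  "(red_rat (rat_of_int (to_int_mod_ring b)) :: 'p::prime_card mod_ring) = b"
  by (simp add: red_rat_of_int of_int_of_int_mod_ring)

lemma red_rat_add:
  assumes "p_integral CARD('p::prime_card) a" and "p_integral CARD('p) b"
  shows "(red_rat (a + b) :: 'p mod_ring) = red_rat a + red_rat b"
proof -
  obtain n d n' d' where nd: "\<not> int CARD('p) dvd d" "a = of_int n / of_int d"
    and nd': "\<not> int CARD('p) dvd d'" "b = of_int n' / of_int d'"
    using assms by (metis p_integral_fractionE)
  have dd: "\<not> int CARD('p) dvd d * d'"
    using nd nd' prime_card_int[where 'a='p] by (simp add: prime_dvd_mult_iff)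
  have "d \<noteq> 0" "d' \<noteq> 0"
    using nd nd' by auto
  hence "a + b = of_int (n * d' + n' * d) / of_int (d * d')"
    using nd nd' by (simp add: field_simps)
  hence "(red_rat (a + b) :: 'p mod_ring) = of_int (n * d' + n' * d) / of_int (d * d')"
    by (simp only: red_rat_fraction[OF dd])
  also have "\<dots> = of_int n / of_int d + of_int n' / of_int d'"
    using nd(1) nd'(1)
    by (simp only: add_frac_eq of_int_add of_int_mult of_int_mod_ring_eq_0_iff not_False_eq_True)
  also have "\<dots> = red_rat a + red_rat b"
    by (simp only: nd(2) nd'(2) red_rat_fraction[OF nd(1)] red_rat_fraction[OF nd'(1)])
  finally show ?thesis .
qed

lemma red_rat_mult:
  assumes "p_integral CARD('p::prime_card) a" and "p_integral CARD('p) b"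
  shows "(red_rat (a * b) :: 'p mod_ring) = red_rat a * red_rat b"
proof -
  obtain n d n' d' where nd: "\<not> int CARD('p) dvd d" "a = of_int n / of_int d"
    and nd': "\<not> int CARD('p) dvd d'" "b = of_int n' / of_int d'"
    using assms by (metis p_integral_fractionE)
  have dd: "\<not> int CARD('p) dvd d * d'"
    using nd nd' prime_card_int[where 'a='p] by (simp add: prime_dvd_mult_iff)
  have "a * b = of_int (n * n') / of_int (d * d')"
    using nd nd' by simp
  hence "(red_rat (a * b) :: 'p mod_ring) = of_int (n * n') / of_int (d * d')"
    by (simp only: red_rat_fraction[OF dd])
  also have "\<dots> = of_int n / of_int d * (of_int n' / of_int d')"
    by simp
  also have "\<dots> = red_rat a * red_rat b"
    by (simp only: nd(2) nd'(2) red_rat_fraction[OF nd(1)] red_rat_fraction[OF nd'(1)])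
  finally show ?thesis .
qed

lemma red_rat_diff:
  assumes "p_integral CARD('p::prime_card) a" and "p_integral CARD('p) b"
  shows "(red_rat (a - b) :: 'p mod_ring) = red_rat a - red_rat b"
proof -
  have "(red_rat (a - b) :: 'p mod_ring) + red_rat b = red_rat a"
    using red_rat_add[OF p_integral_diff[OF prime_card assms] assms(2)] by simp
  thus ?thesis
    by (simp add: eq_diff_eq)
qed

lemma red_rat_eq_0_imp_p_integral_divide:
  assumes "p_integral CARD('p::prime_card) a" and "(red_rat a :: 'p mod_ring) = 0"
  shows "p_integral CARD('p) (a / of_nat CARD('p))"
proof -
  obtain n d where nd: "\<not> int CARD('p) dvd d" "a = of_int n / of_int d"
    using assms(1) by (rule p_integral_fractionE)
  have "(of_int n / of_int d :: 'p mod_ring) = 0" "(of_int d :: 'p mod_ring) \<noteq> 0"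
    using assms(2) red_rat_fraction[OF nd(1), of n] nd by (simp_all add: of_int_mod_ring_eq_0_iff)
  then obtain m where "n = int CARD('p) * m"
    by (auto simp: of_int_mod_ring_eq_0_iff)
  hence "a / of_nat CARD('p) = of_int m / of_int d"
    using nd by simp
  thus ?thesis
    using nd(1) unfolding p_integral_iff_fraction by blast
qed

section \<open>Reduction of polynomials modulo \<open>p\<close>\<close>

definition p_integral_poly :: "nat \<Rightarrow> ('x, rat) mpoly \<Rightarrow> bool" where
  "p_integral_poly p f \<longleftrightarrow> (\<forall>t. p_integral p (Poly_Mapping.lookup f t))"

lemma p_integral_poly_0: "p \<noteq> 1 \<Longrightarrow> p_integral_poly p 0"
  using p_integral_0 by (simp add: p_integral_poly_def)

lemma p_integral_poly_add:
  "prime p \<Longrightarrow> p_integral_poly p f \<Longrightarrow> p_integral_poly p g \<Longrightarrow> p_integral_poly p (f + g)"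
  unfolding p_integral_poly_def by (simp add: lookup_add p_integral_add)

lemma p_integral_poly_diff:
  "prime p \<Longrightarrow> p_integral_poly p f \<Longrightarrow> p_integral_poly p g \<Longrightarrow> p_integral_poly p (f - g)"
  unfolding p_integral_poly_def by (simp add: lookup_minus p_integral_diff)

lemma p_integral_poly_monom_mult:
  assumes "prime p" and "p_integral p c" and "p_integral_poly p g"
  shows "p_integral_poly p (Poly_Mapping.single u c * g)"
  unfolding p_integral_poly_def
proof
  fix k
  show "p_integral p (Poly_Mapping.lookup (Poly_Mapping.single u c * g) k)"
  proof (cases "\<exists>t. k = u + t")
    case True
    thus ?thesis
      using p_integral_mult[OF assms(1,2)] assms(3)
      by (auto simp: lookup_monom_mult p_integral_poly_def)
  next
    case False
    thus ?thesis
      using p_integral_0 assms(1) by (simp add: lookup_monom_mult_notin prime_nat_iff)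
  qed
qed

lemma lookup_red_poly:
  "Poly_Mapping.lookup (red_poly f :: ('x, 'p::prime_card mod_ring) mpoly) t
     = red_rat (Poly_Mapping.lookup f t)"
  unfolding red_poly_def by (simp add: map.rep_eq when_def red_rat_0)

lemma keys_red_poly_subset:
  "Poly_Mapping.keys (red_poly f :: ('x, 'p::prime_card mod_ring) mpoly) \<subseteq> Poly_Mapping.keys f"
  by (auto simp: in_keys_iff lookup_red_poly red_rat_0)

lemma red_poly_0: "(red_poly 0 :: ('x, 'p::prime_card mod_ring) mpoly) = 0"
  by (rule poly_mapping_eqI) (simp add: lookup_red_poly red_rat_0)

lemma red_poly_add:
  assumes "p_integral_poly CARD('p::prime_card) f" and "p_integral_poly CARD('p) g"
  shows "(red_poly (f + g) :: ('x, 'p mod_ring) mpoly) = red_poly f + red_poly g"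
  using assms unfolding p_integral_poly_def
  by (intro poly_mapping_eqI) (simp add: lookup_red_poly lookup_add red_rat_add)

lemma red_poly_diff:
  assumes "p_integral_poly CARD('p::prime_card) f" and "p_integral_poly CARD('p) g"
  shows "(red_poly (f - g) :: ('x, 'p mod_ring) mpoly) = red_poly f - red_poly g"
  using assms unfolding p_integral_poly_def
  by (intro poly_mapping_eqI) (simp add: lookup_red_poly lookup_minus red_rat_diff)

lemma red_poly_monom_mult:
  assumes "p_integral CARD('p::prime_card) c" and "p_integral_poly CARD('p) g"
  shows "(red_poly (Poly_Mapping.single u c * g) :: ('x, 'p mod_ring) mpoly)
    = Poly_Mapping.single u (red_rat c) * red_poly g"
proof (rule poly_mapping_eqI)
  fix k
  show "Poly_Mapping.lookup (red_poly (Poly_Mapping.single u c * g) :: ('x, 'p mod_ring) mpoly) k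
    = Poly_Mapping.lookup (Poly_Mapping.single u (red_rat c) * red_poly g) k"
  proof (cases "\<exists>t. k = u + t")
    case True
    thus ?thesis
      using red_rat_mult[OF assms(1)] assms(2)
      by (auto simp: lookup_monom_mult lookup_red_poly p_integral_poly_def)
  next
    case False
    thus ?thesis
      by (simp add: lookup_monom_mult_notin lookup_red_poly red_rat_0)
  qed
qed

lemma p_integral_reduction_step:
  fixes f g :: "('x, rat) mpoly"
  assumes "p_integral_poly CARD('p::prime_card) f" and "p_integral_poly CARD('p) g"
  shows "p_integral_poly CARD('p) (f - Poly_Mapping.single u (lc ord f) * g)"
    and "(red_poly (f - Poly_Mapping.single u (lc ord f) * g) :: ('x, 'p mod_ring) mpoly)
           = red_poly f - Poly_Mapping.single u (red_rat (lc ord f)) * red_poly g"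
proof -
  have c: "p_integral CARD('p) (lc ord f)"
    using assms(1) unfolding p_integral_poly_def lc_def by blast
  note monom = p_integral_poly_monom_mult[OF prime_card c assms(2), of u]
  show "p_integral_poly CARD('p) (f - Poly_Mapping.single u (lc ord f) * g)"
    by (rule p_integral_poly_diff[OF prime_card assms(1) monom])
  show "(red_poly (f - Poly_Mapping.single u (lc ord f) * g) :: ('x, 'p mod_ring) mpoly)
      = red_poly f - Poly_Mapping.single u (red_rat (lc ord f)) * red_poly g"
    by (simp add: red_poly_diff[OF assms(1) monom] red_poly_monom_mult[OF c assms(2)])
qed

lemma lt_red_poly_eq:
  fixes f :: "('x, rat) mpoly"
  assumes to: "term_order ord" and "(red_rat (lc ord f) :: 'p::prime_card mod_ring) \<noteq> 0"
  shows "lt ord (red_poly f :: ('x, 'p mod_ring) mpoly) = lt ord f"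
proof -
  have "lt ord f \<in> Poly_Mapping.keys (red_poly f :: ('x, 'p mod_ring) mpoly)"
    using assms(2) by (simp add: in_keys_iff lookup_red_poly lc_def)
  thus ?thesis
    using keys_red_poly_subset lt_max[OF to] by (intro lt_eqI[OF to]) blast+
qed

lemma lt_red_poly_monic:
  fixes g :: "('x, rat) mpoly"
  assumes to: "term_order ord" and "lc ord g = 1"
  shows "(red_poly g :: ('x, 'p::prime_card mod_ring) mpoly) \<noteq> 0"
    and "lt ord (red_poly g :: ('x, 'p mod_ring) mpoly) = lt ord g"
proof -
  have "Poly_Mapping.lookup (red_poly g :: ('x, 'p mod_ring) mpoly) (lt ord g) = 1"
    using assms(2) by (simp add: lookup_red_poly lc_def red_rat_1)
  thus "(red_poly g :: ('x, 'p mod_ring) mpoly) \<noteq> 0"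
    by auto
  have "(red_rat (lc ord g) :: 'p mod_ring) \<noteq> 0"
    using assms(2) by (simp add: red_rat_1)
  thus "lt ord (red_poly g :: ('x, 'p mod_ring) mpoly) = lt ord g"
    by (rule lt_red_poly_eq[OF to])
qed

section \<open>Good and bad primes\<close>

lemma good_imp_p_integral_poly:
  assumes "good G p" and "g \<in> G"
  shows "p_integral_poly p g"
  unfolding p_integral_poly_def p_integral_def
proof
  fix t
  have "den_rat (Poly_Mapping.lookup g t) dvd den_poly g"
    unfolding den_poly_def by (rule dvd_Lcm) simp
  also have "den_poly g dvd den_set G"
    unfolding den_set_def by (rule dvd_Lcm) (use assms(2) in simp)
  finally show "\<not> int p dvd den_rat (Poly_Mapping.lookup g t)"
    using assms(1) unfolding good_def using dvd_trans by blast
qed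

lemma prime_dvd_Lcm_finite:
  fixes q :: int
  assumes "prime q" and "finite S" and "q dvd Lcm S"
  shows "\<exists>x\<in>S. q dvd x"
  using assms(2,3)
proof (induction S rule: finite_induct)
  case empty
  thus ?case
    using assms(1) by (metis Lcm_empty not_prime_unit)
next
  case (insert a S)
  have "q dvd lcm a (Lcm S)"
    using insert.prems by simp
  moreover have "lcm a (Lcm S) dvd a * Lcm S"
    by (rule lcm_least) simp_all
  ultimately have "q dvd a * Lcm S"
    by (rule dvd_trans)
  thus ?case
    using insert.IH assms(1) by (auto simp: prime_dvd_mult_iff)
qed

lemma not_good_imp_not_p_integral_poly:
  assumes "prime p" and "finite G" and "\<not> good G p"
  shows "\<exists>g\<in>G. \<not> p_integral_poly p g"
proof -
  have "int p dvd Lcm (den_poly ` G)"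
    using assms(3) by (simp add: good_def den_set_def)
  then obtain g where g: "g \<in> G" "int p dvd den_poly g"
    using prime_dvd_Lcm_finite[of "int p" "den_poly ` G"] assms(1,2) by auto
  have "range (Poly_Mapping.lookup g) \<subseteq> insert 0 (Poly_Mapping.lookup g ` Poly_Mapping.keys g)"
    by (auto simp: in_keys_iff)
  hence "finite (range (Poly_Mapping.lookup g))"
    by (rule finite_subset) simp
  then obtain t where "int p dvd den_rat (Poly_Mapping.lookup g t)"
    using prime_dvd_Lcm_finite[of "int p" "den_rat ` range (Poly_Mapping.lookup g)"] g(2) assms(1)
    unfolding den_poly_def by auto
  thus ?thesis
    using g(1) unfolding p_integral_poly_def p_integral_def by blast
qed

lemma least_not_p_integral_element:
  fixes G :: "('x::finite, rat) mpoly set"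
  assumes to: "term_order ord" and "finite G" and "\<not> good G CARD('p::prime_card)"
  obtains gb where "gb \<in> G" and "\<not> p_integral_poly CARD('p) gb"
    and "\<And>g. g \<in> G \<Longrightarrow> \<not> p_integral_poly CARD('p) g \<Longrightarrow> ord (lt ord gb) (lt ord g)"
proof -
  let ?B = "{g \<in> G. \<not> p_integral_poly CARD('p) g}"
  obtain g0 where "g0 \<in> ?B"
    using not_good_imp_not_p_integral_poly[OF prime_card assms(2,3)] by blast
  then obtain t where t: "t \<in> lt ord ` ?B"
    and t_least: "\<And>y. (y, t) \<in> term_less ord \<Longrightarrow> y \<notin> lt ord ` ?B"
    using wfE_min[OF wf_term_less[OF to], of "lt ord g0" "lt ord ` ?B"] by blast
  then obtain gb where "gb \<in> ?B" "t = lt ord gb"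
    by blast
  thus thesis
    using that t_least term_less_iff[OF to] by blast
qed

lemma lookup_scalar_mult:
  fixes f :: "('x, 'a::comm_semiring_1) mpoly"
  shows "Poly_Mapping.lookup (Poly_Mapping.single 0 c * f) t = c * Poly_Mapping.lookup f t"
  using lookup_monom_mult[of 0 c f t] by simp

lemma p_integral_poly_power_multiple_exists:
  assumes prime: "prime p"
  shows "\<exists>e. p_integral_poly p (Poly_Mapping.single 0 (of_nat p ^ e) * f)"
proof -
  have "\<forall>t. \<exists>e. p_integral p (of_nat p ^ e * Poly_Mapping.lookup f t)"
    using p_integral_power_mult_exists[OF prime] by blast
  from choice[OF this]
  obtain E where E: "\<And>t. p_integral p (of_nat p ^ E t * Poly_Mapping.lookup f t)"
    by blast
  obtain B where B: "\<And>t. t \<in> Poly_Mapping.keys f \<Longrightarrow> E t \<le> B"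
    using finite_nat_set_iff_bounded_le[of "E ` Poly_Mapping.keys f"] by auto
  have "p_integral p (of_nat p ^ B * Poly_Mapping.lookup f t)" for t
  proof (cases "t \<in> Poly_Mapping.keys f")
    case True
    hence "(of_nat p ^ B :: rat) = of_nat p ^ (B - E t) * of_nat p ^ E t"
      using B by (simp flip: power_add)
    thus ?thesis
      using p_integral_power_mult[OF prime E[of t], of "B - E t"] by (simp add: mult.assoc)
  next
    case False
    thus ?thesis
      using p_integral_0 prime by (simp add: in_keys_iff prime_nat_iff)
  qed
  thus ?thesis
    unfolding p_integral_poly_def lookup_scalar_mult by blast
qed

text \<open>Take the least power of \<open>p\<close> that makes \<open>f\<close> \<open>p\<close>-integral: one \<open>p\<close> less leaves a
  coefficient with \<open>p\<close> in its denominator, so some coefficient of the multiple is a \<open>p\<close>-adic unit.\<close>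

lemma p_power_multiple_nonzero_red:
  fixes f :: "('x, rat) mpoly"
  assumes "\<not> p_integral_poly CARD('p::prime_card) f"
  obtains e where "e > 0"
    and "p_integral_poly CARD('p) (Poly_Mapping.single 0 (of_nat CARD('p) ^ e) * f)"
    and "(red_poly (Poly_Mapping.single 0 (of_nat CARD('p) ^ e) * f) :: ('x, 'p mod_ring) mpoly)
      \<noteq> 0"
proof -
  let ?P = "CARD('p)"
  let ?scaled = "\<lambda>e. Poly_Mapping.single 0 (of_nat ?P ^ e) * f"
  define e where "e = (LEAST e. p_integral_poly ?P (?scaled e))"
  have e_int: "p_integral_poly ?P (?scaled e)"
    unfolding e_def by (rule LeastI_ex[OF p_integral_poly_power_multiple_exists[OF prime_card]])
  have "e \<noteq> 0"
  proof
    assume "e = 0"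
    hence "p_integral_poly ?P f"
      using e_int by (simp add: p_integral_poly_def lookup_scalar_mult)
    thus False
      using assms by blast
  qed
  have "\<not> p_integral_poly ?P (?scaled (e - 1))"
    unfolding e_def by (rule not_less_Least) (use \<open>e \<noteq> 0\<close> e_def in simp)
  then obtain t where t: "\<not> p_integral ?P (of_nat ?P ^ (e - 1) * Poly_Mapping.lookup f t)"
    unfolding p_integral_poly_def lookup_scalar_mult by blast
  have "(red_poly (?scaled e) :: ('x, 'p mod_ring) mpoly) \<noteq> 0"
  proof
    assume "(red_poly (?scaled e) :: ('x, 'p mod_ring) mpoly) = 0"
    hence "(red_rat (Poly_Mapping.lookup (?scaled e) t) :: 'p mod_ring) = 0"
      using lookup_red_poly[of "?scaled e" t, where 'p='p] by simp
    hence "p_integral ?P (Poly_Mapping.lookup (?scaled e) t / of_nat ?P)"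
      using e_int red_rat_eq_0_imp_p_integral_divide unfolding p_integral_poly_def by blast
    moreover have "Poly_Mapping.lookup (?scaled e) t / of_nat ?P
        = of_nat ?P ^ (e - 1) * Poly_Mapping.lookup f t"
      using \<open>e \<noteq> 0\<close> prime_gt_0_nat[OF prime_card[where 'a='p]] unfolding lookup_scalar_mult
      by (cases e) simp_all
    ultimately show False
      using t by simp
  qed
  thus thesis
    using that \<open>e \<noteq> 0\<close> e_int by blast
qed

text \<open>The leading coefficient \<open>1\<close> of \<open>g\<close> becomes \<open>p\<^sup>e \<equiv> 0\<close>.\<close>

lemma lt_red_poly_p_power_multiple:
  fixes g :: "('x, rat) mpoly"
  assumes to: "term_order ord" and "lc ord g = 1" and "e > 0"
    and nz: "(red_poly (Poly_Mapping.single 0 (of_nat CARD('p) ^ e) * g)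
      :: ('x, 'p::prime_card mod_ring) mpoly) \<noteq> 0"
  shows "(lt ord (red_poly (Poly_Mapping.single 0 (of_nat CARD('p) ^ e) * g)
      :: ('x, 'p mod_ring) mpoly), lt ord g) \<in> term_less ord"
    and "lt ord (red_poly (Poly_Mapping.single 0 (of_nat CARD('p) ^ e) * g)
      :: ('x, 'p mod_ring) mpoly) \<in> Poly_Mapping.keys g"
proof -
  let ?f = "Poly_Mapping.single 0 (of_nat CARD('p) ^ e) * g"
  let ?h = "red_poly ?f :: ('x, 'p mod_ring) mpoly"
  have key_h: "lt ord ?h \<in> Poly_Mapping.keys ?h"
    by (rule lt_in_keys[OF to nz])
  thus key_g: "lt ord ?h \<in> Poly_Mapping.keys g"
    using keys_red_poly_subset keys_monom_mult_subset[of 0 "of_nat CARD('p) ^ e" g] by fastforce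
  have "Poly_Mapping.lookup ?f (lt ord g) = of_int (int CARD('p) ^ e)"
    using assms(2) by (simp add: lookup_scalar_mult lc_def)
  moreover have "(of_int (int CARD('p) ^ e) :: 'p mod_ring) = 0"
    using \<open>e > 0\<close> by (simp add: of_int_mod_ring_eq_0_iff dvd_power)
  ultimately have "Poly_Mapping.lookup ?h (lt ord g) = 0"
    by (simp only: lookup_red_poly red_rat_of_int)
  hence "lt ord ?h \<noteq> lt ord g"
    using key_h by (auto simp: in_keys_iff)
  thus "(lt ord ?h, lt ord g) \<in> term_less ord"
    using lt_max[OF to key_g] unfolding term_less_def by blast
qed

section \<open>Leading terms of the reduced ideal\<close>

lemma update_eq_single_add:
  "k \<notin> Poly_Mapping.keys f \<Longrightarrow> Poly_Mapping.update k b f = Poly_Mapping.single k b + f"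
  by (rule poly_mapping_eqI)
    (auto simp: lookup_update lookup_add lookup_single when_def in_keys_iff)

text \<open>Polynomials over the prime field lift monomial by monomial to \<open>p\<close>-integral ones.\<close>

lemma mult_red_poly_mem_image:
  fixes I :: "('x, rat) mpoly set"
  assumes I: "is_ideal I" and a: "a \<in> I" "p_integral_poly CARD('p::prime_card) a"
  shows "(r :: ('x, 'p mod_ring) mpoly) * red_poly a
    \<in> red_poly ` {f \<in> I. p_integral_poly CARD('p) f}"
proof (induction r rule: update_induct)
  case const
  show ?case
    using ideal_zero[OF I] p_integral_poly_0[OF card_prime_card_neq_1] red_poly_0 by force
next
  case (update r k b)
  then obtain y where y: "y \<in> I" "p_integral_poly CARD('p) y" "r * red_poly a = red_poly y"
    by blast
  let ?c = "rat_of_int (to_int_mod_ring b)"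
  have c: "p_integral CARD('p) ?c"
    by (rule p_integral_of_int[OF card_prime_card_neq_1])
  note monom = p_integral_poly_monom_mult[OF prime_card c a(2), of k]
  have "Poly_Mapping.update k b r * red_poly a
      = Poly_Mapping.single k b * red_poly a + r * red_poly a"
    by (simp add: update_eq_single_add[OF update(1)] distrib_right)
  also have "\<dots> = red_poly (Poly_Mapping.single k ?c * a + y)"
    by (simp add: red_poly_add[OF monom y(2)] red_poly_monom_mult[OF c a(2)]
        red_rat_to_int_mod_ring y(3))
  finally show ?case
    using ideal_add[OF I ideal_mult[OF I a(1)] y(1)] p_integral_poly_add[OF prime_card monom y(2)]
    by blast
qed

lemma is_ideal_red_poly_image:
  fixes I :: "('x, rat) mpoly set"
  assumes I: "is_ideal I"
  shows "is_ideal (red_poly ` {f \<in> I. p_integral_poly CARD('p::prime_card) f}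
    :: ('x, 'p mod_ring) mpoly set)" (is "is_ideal ?R")
proof -
  have add: "x + y \<in> ?R" if xy: "x \<in> ?R" "y \<in> ?R" for x y
  proof -
    obtain a b where "a \<in> I" "p_integral_poly CARD('p) a" "x = red_poly a"
      "b \<in> I" "p_integral_poly CARD('p) b" "y = red_poly b"
      using xy by blast
    moreover have "p_integral_poly CARD('p) (a + b)"
      using p_integral_poly_add[OF prime_card] calculation by blast
    moreover have "x + y = red_poly (a + b)"
      using calculation by (simp add: red_poly_add)
    ultimately show ?thesis
      using ideal_add[OF I] by blast
  qed
  have "0 \<in> ?R"
    using mult_red_poly_mem_image[OF I ideal_zero[OF I] p_integral_poly_0[OF card_prime_card_neq_1],
        of 0]
    by simp
  thus ?thesis
    unfolding is_ideal_def using add mult_red_poly_mem_image[OF I] by blast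
qed

lemma ideal_gen_red_poly_subset:
  fixes I G :: "('x, rat) mpoly set"
  assumes "is_ideal I" and "G \<subseteq> I" and "\<forall>g\<in>G. p_integral_poly CARD('p::prime_card) g"
  shows "(ideal_gen (red_poly ` G) :: ('x, 'p mod_ring) mpoly set)
    \<subseteq> red_poly ` {f \<in> I. p_integral_poly CARD('p) f}"
  using ideal_gen_least[OF is_ideal_red_poly_image[OF assms(1)]] assms(2,3) by blast

text \<open>The division algorithm by a \<open>p\<close>-integral reduced basis never introduces \<open>p\<close> into a
  denominator, so it can be run modulo \<open>p\<close>.\<close>

lemma red_poly_mem_ideal_gen:
  fixes \<sigma> :: "('x::finite) pp \<Rightarrow> 'x pp \<Rightarrow> bool" and I G :: "('x, rat) mpoly set"
  assumes \<sigma>: "term_order \<sigma>" and I: "is_ideal I" and GB: "is_reduced_GB \<sigma> I G"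
    and G_int: "\<forall>g\<in>G. p_integral_poly CARD('p::prime_card) g"
    and "f \<in> I" and "p_integral_poly CARD('p) f"
  shows "(red_poly f :: ('x, 'p mod_ring) mpoly) \<in> ideal_gen (red_poly ` G)"
  using wf_term_less[OF \<sigma>] assms(5,6)
proof (induction "lt \<sigma> f" arbitrary: f rule: wf_induct_rule)
  case less
  let ?J = "ideal_gen (red_poly ` G) :: ('x, 'p mod_ring) mpoly set"
  have J: "is_ideal ?J"
    by (rule is_ideal_ideal_gen)
  show ?case
  proof (cases "f = 0")
    case True
    thus ?thesis
      using ideal_zero[OF J] by (simp add: red_poly_0)
  next
    case False
    obtain g u where g: "g \<in> G" "g \<in> I" "g \<noteq> 0" "lc \<sigma> g = 1" "lt \<sigma> f = lt \<sigma> g + u"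
      using reduced_GB_divisor[OF GB less.prems(1) False] by blast
    let ?f' = "f - Poly_Mapping.single u (lc \<sigma> f) * g"
    have g_int: "p_integral_poly CARD('p) g"
      using G_int g(1) by blast
    note step = p_integral_reduction_step[OF less.prems(2) g_int, of u \<sigma>]
    have "?f' \<in> I"
      by (rule ideal_diff[OF I less.prems(1) ideal_mult[OF I g(2)]])
    have "(red_poly ?f' :: ('x, 'p mod_ring) mpoly) \<in> ?J"
    proof (cases "?f' = 0")
      case True
      thus ?thesis
        using ideal_zero[OF J] by (simp add: red_poly_0)
    next
      case False
      thus ?thesis
        using less.hyps[OF lt_reduction_step[OF \<sigma> \<open>f \<noteq> 0\<close> g(3-5) False]] \<open>?f' \<in> I\<close> step(1)
        by blast
    qed
    moreover have "Poly_Mapping.single u (red_rat (lc \<sigma> f)) * red_poly g \<in> ?J"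
      using ideal_mult[OF J] ideal_gen_superset g(1) by blast
    ultimately show ?thesis
      using ideal_add[OF J] step(2) by (metis diff_add_cancel)
  qed
qed

lemma lt_red_poly_in_LTs:
  fixes \<tau> :: "('x::finite) pp \<Rightarrow> 'x pp \<Rightarrow> bool" and I G :: "('x, rat) mpoly set"
  assumes \<tau>: "term_order \<tau>" and I: "is_ideal I" and GB: "is_reduced_GB \<tau> I G"
    and G_int: "\<forall>g\<in>G. p_integral_poly CARD('p::prime_card) g"
    and "f \<in> I" and "p_integral_poly CARD('p) f" and "(red_poly f :: ('x, 'p mod_ring) mpoly) \<noteq> 0"
  shows "lt \<tau> (red_poly f :: ('x, 'p mod_ring) mpoly) \<in> LTs \<tau> I"
  using wf_term_less[OF \<tau>] assms(5-7)
proof (induction "lt \<tau> f" arbitrary: f rule: wf_induct_rule)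
  case less
  have "f \<noteq> 0"
    using less.prems(3) by (auto simp: red_poly_0)
  show ?case
  proof (cases "(red_rat (lc \<tau> f) :: 'p mod_ring) = 0")
    case False
    thus ?thesis
      using LTsI[OF less.prems(1) \<open>f \<noteq> 0\<close>, of \<tau>] lt_red_poly_eq[OF \<tau> False] by simp
  next
    case True
    obtain g u where g: "g \<in> G" "g \<in> I" "g \<noteq> 0" "lc \<tau> g = 1" "lt \<tau> f = lt \<tau> g + u"
      using reduced_GB_divisor[OF GB less.prems(1) \<open>f \<noteq> 0\<close>] by blast
    let ?f' = "f - Poly_Mapping.single u (lc \<tau> f) * g"
    have g_int: "p_integral_poly CARD('p) g"
      using G_int g(1) by blast
    note step = p_integral_reduction_step[OF less.prems(2) g_int, of u \<tau>]
    have "?f' \<in> I"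
      by (rule ideal_diff[OF I less.prems(1) ideal_mult[OF I g(2)]])
    have red_f': "(red_poly ?f' :: ('x, 'p mod_ring) mpoly) = red_poly f"
      using step(2) True by simp
    hence "?f' \<noteq> 0"
      using less.prems(3) by (auto simp: red_poly_0)
    from less.hyps[OF lt_reduction_step[OF \<tau> \<open>f \<noteq> 0\<close> g(3-5) this] \<open>?f' \<in> I\<close> step(1)]
    show ?thesis
      using red_f' less.prems(3) by simp
  qed
qed

context
  fixes \<sigma> \<tau> :: "('x::finite) pp \<Rightarrow> 'x pp \<Rightarrow> bool" and I G\<sigma> G\<tau> :: "('x, rat) mpoly set"
  assumes \<sigma>: "term_order \<sigma>" and \<tau>: "term_order \<tau>" and I: "is_ideal I"
    and GB\<sigma>: "is_reduced_GB \<sigma> I G\<sigma>" and GB\<tau>: "is_reduced_GB \<tau> I G\<tau>"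
    and G\<sigma>_int: "\<forall>g\<in>G\<sigma>. p_integral_poly CARD('p::prime_card) g"
begin

abbreviation (input) red_ideal :: "('x, 'p mod_ring) mpoly set" where
  "red_ideal \<equiv> ideal_gen (red_poly ` G\<sigma>)"

lemma LTs_red_ideal_if_divisors_p_integral:
  assumes u: "u \<in> LTs \<tau> I"
    and divisors: "\<And>g. g \<in> G\<tau> \<Longrightarrow> pp_dvd (lt \<tau> g) u \<Longrightarrow> p_integral_poly CARD('p) g"
  shows "u \<in> LTs \<tau> red_ideal"
proof -
  obtain f where "f \<in> I" "f \<noteq> 0" "u = lt \<tau> f"
    using u unfolding LTs_def by blast
  then obtain g w where g: "g \<in> G\<tau>" "g \<in> I" "g \<noteq> 0" "lc \<tau> g = 1" "u = lt \<tau> g + w"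
    using reduced_GB_divisor[OF GB\<tau>] by metis
  hence dvd: "pp_dvd (lt \<tau> g) u"
    unfolding pp_dvd_def by blast
  hence g_int: "p_integral_poly CARD('p) g"
    using divisors g(1) by blast
  have "red_poly g \<in> red_ideal"
    by (rule red_poly_mem_ideal_gen[OF \<sigma> I GB\<sigma> G\<sigma>_int g(2) g_int])
  hence "lt \<tau> g \<in> LTs \<tau> red_ideal"
    using LTsI lt_red_poly_monic[OF \<tau> g(4)] by metis
  thus ?thesis
    using LTs_pp_dvd[OF \<tau> is_ideal_ideal_gen _ dvd] by blast
qed

lemma LTs_red_ideal_eq_if_good:
  assumes "good G\<tau> CARD('p)"
  shows "LTs \<tau> red_ideal = LTs \<tau> I"
proof
  have G\<tau>_int: "\<forall>g\<in>G\<tau>. p_integral_poly CARD('p) g"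
    using assms good_imp_p_integral_poly by blast
  show "LTs \<tau> red_ideal \<subseteq> LTs \<tau> I"
  proof
    fix t assume "t \<in> LTs \<tau> red_ideal"
    then obtain h where h: "h \<in> red_ideal" "h \<noteq> 0" "t = lt \<tau> h"
      unfolding LTs_def by blast
    moreover have "G\<sigma> \<subseteq> I"
      using GB\<sigma> unfolding is_reduced_GB_def is_GB_def by blast
    ultimately obtain f where "f \<in> I" "p_integral_poly CARD('p) f" "h = red_poly f"
      using ideal_gen_red_poly_subset[OF I _ G\<sigma>_int] by blast
    thus "t \<in> LTs \<tau> I"
      using lt_red_poly_in_LTs[OF \<tau> I GB\<tau> G\<tau>_int] h by blast
  qed
  show "LTs \<tau> I \<subseteq> LTs \<tau> red_ideal"
    using LTs_red_ideal_if_divisors_p_integral G\<tau>_int by blast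
qed

lemma new_leading_term_below_bad:
  assumes gb: "gb \<in> G\<tau>" "\<not> p_integral_poly CARD('p) gb"
  obtains s where "s \<in> LTs \<tau> red_ideal" and "s \<notin> LTs \<tau> I" and "(s, lt \<tau> gb) \<in> term_less \<tau>"
proof -
  have gb_I: "gb \<in> I" "lc \<tau> gb = 1"
    using GB\<tau> gb(1) unfolding is_reduced_GB_def is_GB_def by auto
  obtain e where e: "e > 0"
    "p_integral_poly CARD('p) (Poly_Mapping.single 0 (of_nat CARD('p) ^ e) * gb)"
    "(red_poly (Poly_Mapping.single 0 (of_nat CARD('p) ^ e) * gb) :: ('x, 'p mod_ring) mpoly) \<noteq> 0"
    using p_power_multiple_nonzero_red[OF gb(2)] by blast
  let ?h = "red_poly (Poly_Mapping.single 0 (of_nat CARD('p) ^ e) * gb) :: ('x, 'p mod_ring) mpoly"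
  have "?h \<in> red_ideal"
    by (rule red_poly_mem_ideal_gen[OF \<sigma> I GB\<sigma> G\<sigma>_int ideal_mult[OF I gb_I(1)] e(2)])
  hence "lt \<tau> ?h \<in> LTs \<tau> red_ideal"
    using LTsI e(3) by blast
  moreover note below = lt_red_poly_p_power_multiple[OF \<tau> gb_I(2) e(1,3)]
  moreover have "lt \<tau> ?h \<notin> LTs \<tau> I"
    using reduced_GB_key_notin_LTs[OF \<tau> GB\<tau> gb(1) below(2)] below(1)
    unfolding term_less_def by blast
  ultimately show thesis
    using that by blast
qed

lemma LTs_below_least_bad_subset:
  assumes least: "\<And>g. g \<in> G\<tau> \<Longrightarrow> \<not> p_integral_poly CARD('p) g \<Longrightarrow> \<tau> (lt \<tau> gb) (lt \<tau> g)"
    and u: "(u, lt \<tau> gb) \<in> term_less \<tau>" "u \<in> LTs \<tau> I"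
  shows "u \<in> LTs \<tau> red_ideal"
proof (rule LTs_red_ideal_if_divisors_p_integral[OF u(2)])
  fix g assume "g \<in> G\<tau>" "pp_dvd (lt \<tau> g) u"
  thus "p_integral_poly CARD('p) g"
    using least u(1) term_order_pp_dvd[OF \<tau>] term_order_trans[OF \<tau>] term_less_iff[OF \<tau>] by blast
qed

end

section \<open>Comparing the tuples of minimal generators\<close>

lemma (in linorder) sorted_wrt_less_takeWhile_eq_filter:
  "sorted_wrt (<) xs \<Longrightarrow> takeWhile (\<lambda>u. u < m) xs = filter (\<lambda>u. u < m) xs"
proof (induction xs)
  case (Cons x xs)
  show ?case
  proof (cases "x < m")
    case False
    hence "\<forall>y\<in>set xs. \<not> y < m"
      using Cons.prems less_trans by auto
    thus ?thesis
      using False by simp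
  qed (use Cons in simp)
qed simp

lemma mem_set_dropWhile: "z \<in> set zs \<Longrightarrow> \<not> P z \<Longrightarrow> z \<in> set (dropWhile P zs)"
  using takeWhile_dropWhile_id[of P zs] set_takeWhileD[of z P zs] by (metis Un_iff set_append)

lemma length_takeWhile_less:
  assumes "z \<in> set zs" and "\<not> P z"
  shows "length (takeWhile P zs) < length zs" and "\<not> P (zs ! length (takeWhile P zs))"
proof -
  have "dropWhile P zs \<noteq> []"
    using mem_set_dropWhile[of z zs P, OF assms] by (metis empty_iff list.set(1))
  thus "length (takeWhile P zs) < length zs"
    by (simp add: dropWhile_eq_drop)
  thus "\<not> P (zs ! length (takeWhile P zs))"
    by (rule nth_length_takeWhile)
qed

lemma (in linorder) sorted_wrt_less_first_difference:
  assumes xs: "sorted_wrt (<) xs" and ys: "sorted_wrt (<) ys"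
    and m: "m \<in> set ys" "m \<notin> set xs" and agree: "\<And>u. u < m \<Longrightarrow> u \<in> set xs \<longleftrightarrow> u \<in> set ys"
    and t: "t \<in> set xs" "m < t"
  shows "\<exists>k < min (length xs) (length ys). take k ys = take k xs \<and> ys ! k = m \<and> m < xs ! k"
proof -
  let ?P = "\<lambda>u. u < m"
  define k where "k = length (takeWhile ?P xs)"
  have "set (filter ?P ys) = set (filter ?P xs)"
    using agree by auto
  hence "takeWhile ?P ys = takeWhile ?P xs"
    using xs ys
    by (simp add: sorted_wrt_less_takeWhile_eq_filter strict_sorted_equal sorted_wrt_filter)
  hence take_eq: "take k ys = take k xs" and k_ys: "k = length (takeWhile ?P ys)"
    unfolding k_def by (metis takeWhile_eq_take)+
  have "\<not> t < m"
    using t(2) by auto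
  note ky = length_takeWhile_less[where P = ?P, OF m(1) less_irrefl, folded k_ys]
    and kx = length_takeWhile_less[where P = ?P, OF t(1) this, folded k_def]
  have "ys ! k = m"
  proof -
    have "m \<in> set (drop k ys)"
      using mem_set_dropWhile[OF m(1), of ?P] k_ys by (simp add: dropWhile_eq_drop)
    then obtain i where "i < length (drop k ys)" "drop k ys ! i = m"
      unfolding in_set_conv_nth by blast
    hence "k + i < length ys" "ys ! (k + i) = m"
      using ky(1) by auto
    thus ?thesis
      using ky(2) sorted_wrt_nth_less[OF ys, of k "k + i"] by (cases i) (auto simp: not_less)
  qed
  moreover have "m < xs ! k"
    using kx m(2) nth_mem[OF kx(1)] by (metis not_less_iff_gr_or_eq)
  ultimately show ?thesis
    using take_eq kx(1) ky(1) by auto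
qed

lemma O_tuple_spec:
  fixes J :: "('x::finite, 'a::zero) mpoly set"
  assumes to: "term_order ord"
  shows "set (O_tuple ord J) = min_gens ord J"
    and "sorted_wrt (\<lambda>s t. ord s t \<and> s \<noteq> t) (O_tuple ord J)"
proof -
  let ?R = "\<lambda>s t. ord s t \<and> s \<noteq> t"
  have "finite (min_gens ord J)"
    by (rule finite_pp_antichain) (auto simp: min_gens_def)
  hence "\<exists>!xs. sorted_wrt ?R xs \<and> set xs = min_gens ord J"
    by (rule linorder.ex1_sorted_list_for_set_if_finite[OF term_order_linorder[OF to]])
  then obtain xs where xs: "sorted_wrt ?R xs" "set xs = min_gens ord J"
    and unique: "\<And>ys. sorted_wrt ?R ys \<Longrightarrow> set ys = min_gens ord J \<Longrightarrow> ys = xs"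
    by blast
  have "O_tuple ord J = xs"
    unfolding O_tuple_def by (rule the_equality) (use xs unique in blast)+
  thus "set (O_tuple ord J) = min_gens ord J" "sorted_wrt ?R (O_tuple ord J)"
    using xs by simp_all
qed

context
  fixes ord :: "('x::finite) pp \<Rightarrow> 'x pp \<Rightarrow> bool"
  assumes to: "term_order ord"
begin

lemma tuple_less_if_first_difference:
  assumes T: "sorted_wrt (\<lambda>s t. ord s t \<and> s \<noteq> t) T" and T': "sorted_wrt (\<lambda>s t. ord s t \<and> s \<noteq> t) T'"
    and m: "m \<in> set T'" "m \<notin> set T"
    and agree: "\<And>u. (u, m) \<in> term_less ord \<Longrightarrow> u \<in> set T \<longleftrightarrow> u \<in> set T'"
    and t: "t \<in> set T" "(m, t) \<in> term_less ord"
  shows "tuple_less ord T' T \<and> \<not> proper_prefix_of T T'"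
proof -
  have agree': "u \<in> set T \<longleftrightarrow> u \<in> set T'" if "ord u m \<and> u \<noteq> m" for u
    using agree that unfolding term_less_def by blast
  have "ord m t \<and> m \<noteq> t"
    using t(2) unfolding term_less_def by blast
  then obtain k where k: "k < min (length T) (length T')" "take k T' = take k T" "T' ! k = m"
    "ord m (T ! k) \<and> m \<noteq> T ! k"
    using linorder.sorted_wrt_less_first_difference[OF term_order_linorder[OF to] T T' m agree']
      t(1) by blast
  have "tuple_less ord T' T"
    unfolding tuple_less_def using k by auto
  moreover have "\<not> proper_prefix_of T T'"
  proof
    assume "proper_prefix_of T T'"
    hence "T' ! k = T ! k"
      unfolding proper_prefix_of_def using k(1) by (metis min_less_iff_conj nth_take)
    thus False
      using k(3,4) by simp
  qed
  ultimately show ?thesis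
    by blast
qed

lemma min_gens_agree_below:
  fixes J :: "('x, 'a::zero) mpoly set" and J' :: "('x, 'b::zero) mpoly set"
  assumes agree: "\<And>u. (u, m) \<in> term_less ord \<Longrightarrow> u \<in> LTs ord J \<longleftrightarrow> u \<in> LTs ord J'"
    and u: "(u, m) \<in> term_less ord"
  shows "u \<in> min_gens ord J \<longleftrightarrow> u \<in> min_gens ord J'"
proof -
  have "(v, m) \<in> term_less ord" if "pp_dvd v u" for v
    using term_order_pp_dvd[OF to that] u term_less_iff[OF to] term_order_trans[OF to] by blast
  thus ?thesis
    unfolding min_gens_def using agree u by blast
qed

lemma least_new_leading_term_in_min_gens:
  fixes J :: "('x, 'a::field) mpoly set" and J' :: "('x, 'b::zero) mpoly set"
  assumes J: "is_ideal J" and m: "m \<in> LTs ord J'" "m \<notin> LTs ord J"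
    and least: "\<And>y. (y, m) \<in> term_less ord \<Longrightarrow> y \<in> LTs ord J' \<Longrightarrow> y \<in> LTs ord J"
  shows "m \<in> min_gens ord J'"
  unfolding min_gens_def
proof (intro CollectI conjI ballI impI)
  show "m \<in> LTs ord J'"
    by (rule m(1))
  fix v assume v: "v \<in> LTs ord J'" "pp_dvd v m"
  show "v = m"
  proof (rule ccontr)
    assume "v \<noteq> m"
    hence "(v, m) \<in> term_less ord"
      using term_order_pp_dvd[OF to v(2)] unfolding term_less_def by blast
    thus False
      using least v(1) LTs_pp_dvd[OF to J _ v(2)] m(2) by blast
  qed
qed

text \<open>The \<open>ord\<close>-least element \<open>m\<close> of \<open>LT(J') - LT(J)\<close> is a new minimal generator, both tuples
  agree below \<open>m\<close>, and the minimal generator \<open>t > m\<close> of \<open>LT(J)\<close> sits at \<open>m\<close>'s position in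
  \<open>O(J)\<close> or later.\<close>

lemma O_tuple_less_if_new_leading_term:
  fixes J :: "('x, 'a::field) mpoly set" and J' :: "('x, 'b::zero) mpoly set"
  assumes J: "is_ideal J" and t: "t \<in> min_gens ord J"
    and below: "\<And>u. (u, t) \<in> term_less ord \<Longrightarrow> u \<in> LTs ord J \<Longrightarrow> u \<in> LTs ord J'"
    and s: "s \<in> LTs ord J'" "s \<notin> LTs ord J" "(s, t) \<in> term_less ord"
  shows "tuple_less ord (O_tuple ord J') (O_tuple ord J)
    \<and> \<not> proper_prefix_of (O_tuple ord J) (O_tuple ord J')"
proof -
  obtain m where "m \<in> LTs ord J' - LTs ord J"
    and least: "\<And>y. (y, m) \<in> term_less ord \<Longrightarrow> y \<notin> LTs ord J' - LTs ord J"
    using wfE_min[OF wf_term_less[OF to] DiffI[OF s(1,2)]] by blast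
  hence m: "m \<in> LTs ord J'" "m \<notin> LTs ord J"
    and m_least: "\<And>y. (y, m) \<in> term_less ord \<Longrightarrow> y \<in> LTs ord J' \<Longrightarrow> y \<in> LTs ord J"
    by auto
  have "ord m s"
    using m_least s(1,2) term_less_iff[OF to] by blast
  hence mt: "(m, t) \<in> term_less ord"
    using s(3) term_less_iff[OF to] term_order_trans[OF to] by blast
  have agree: "u \<in> LTs ord J \<longleftrightarrow> u \<in> LTs ord J'" if "(u, m) \<in> term_less ord" for u
    using below m_least[OF that] term_less_trans[OF to that mt] by blast
  have "m \<in> min_gens ord J'"
    by (rule least_new_leading_term_in_min_gens[OF J m m_least])
  moreover have "m \<notin> min_gens ord J"
    using m(2) unfolding min_gens_def by blast
  ultimately show ?thesis
    using min_gens_agree_below[OF agree] t mt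
    by (intro tuple_less_if_first_difference O_tuple_spec[OF to])
      (simp_all add: O_tuple_spec(1)[OF to])
qed

end

theorem theorem4p13:
  fixes \<sigma> \<tau> :: "('x::finite) pp \<Rightarrow> 'x pp \<Rightarrow> bool"
    and I G\<sigma> G\<tau> :: "('x, rat) mpoly set"
  assumes "term_order \<sigma>" and "term_order \<tau>"
    and "is_ideal I" and "I \<noteq> {0}"
    and "is_reduced_GB \<sigma> I G\<sigma>" and "is_reduced_GB \<tau> I G\<tau>"
    and "good G\<sigma> CARD('p::prime_card)"
  shows "(good G\<tau> CARD('p) \<longrightarrow>
            O_tuple \<tau> (ideal_gen ((red_poly :: ('x, rat) mpoly \<Rightarrow> ('x, 'p mod_ring) mpoly) ` G\<sigma>))
              = O_tuple \<tau> I)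
       \<and> (\<not> good G\<tau> CARD('p) \<longrightarrow>
            tuple_less \<tau> (O_tuple \<tau> (ideal_gen ((red_poly :: ('x, rat) mpoly \<Rightarrow> ('x, 'p mod_ring) mpoly) ` G\<sigma>)))
              (O_tuple \<tau> I)
          \<and> \<not> proper_prefix_of (O_tuple \<tau> I)
              (O_tuple \<tau> (ideal_gen ((red_poly :: ('x, rat) mpoly \<Rightarrow> ('x, 'p mod_ring) mpoly) ` G\<sigma>))))"
proof -
  let ?Ip = "ideal_gen ((red_poly :: ('x, rat) mpoly \<Rightarrow> ('x, 'p mod_ring) mpoly) ` G\<sigma>)"
  have "\<forall>g\<in>G\<sigma>. p_integral_poly CARD('p) g"
    using assms(7) good_imp_p_integral_poly by blast
  note setting = assms(1,2,3,5,6) this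
  have good: "O_tuple \<tau> ?Ip = O_tuple \<tau> I" if "good G\<tau> CARD('p)"
    using LTs_red_ideal_eq_if_good[OF setting that] unfolding O_tuple_def min_gens_def by simp
  have bad: "tuple_less \<tau> (O_tuple \<tau> ?Ip) (O_tuple \<tau> I)
      \<and> \<not> proper_prefix_of (O_tuple \<tau> I) (O_tuple \<tau> ?Ip)"
    if bad_prime: "\<not> good G\<tau> CARD('p)"
  proof -
    have "finite G\<tau>"
      using assms(6) unfolding is_reduced_GB_def is_GB_def by blast
    then obtain gb where gb: "gb \<in> G\<tau>" "\<not> p_integral_poly CARD('p) gb"
      and least: "\<And>g. g \<in> G\<tau> \<Longrightarrow> \<not> p_integral_poly CARD('p) g \<Longrightarrow> \<tau> (lt \<tau> gb) (lt \<tau> g)"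
      using least_not_p_integral_element[OF assms(2) _ bad_prime] by blast
    obtain s where "s \<in> LTs \<tau> ?Ip" "s \<notin> LTs \<tau> I" "(s, lt \<tau> gb) \<in> term_less \<tau>"
      using new_leading_term_below_bad[OF setting gb] by blast
    thus ?thesis
      using O_tuple_less_if_new_leading_term[OF assms(2,3)
          reduced_GB_lt_min_gens[OF assms(2,6) gb(1)] LTs_below_least_bad_subset[OF setting least]]
      by blast
  qed
  show ?thesis
    using good bad by blast
qed

end
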